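(* Let $n\ge3$, $b\in\mathbb{R}^n$, $K\in\{0,\ldots,n-3\}$, $\gamma>0$, and let $x^*$ be a d-stationary point of $$\min_{x\in\mathbb{R}^n}\ \tfrac12\|b-x\|_2^2+\gamma T_{K,n-2,1}(D^{(2,n)}x).$$ Let $X\in\mathbb{R}^{n\times2}$ be the matrix whose $i$-th row is $(1,i)$ and $\hat b=X(X^\top X)^{-1}X^\top b$. If $$\gamma>\frac{\|b-\hat b\|_2}{2\sqrt{(1-\cos\frac{\pi}{n})(1-\cos\frac{\pi}{n-1})}},$$ then $T_{K,n-2,1}(D^{(2,n)}x^* )=0$.
   Context: $D^{(2,n)}\in\mathbb{R}^{(n-2)\times n}$ is the second-order difference matrix: its $i$-th row has entries $1,-2,1$ in columns $i,i+1,i+2$ and zeros elsewhere. $T_{K,m,1}(z)$ for $z\in\mathbb{R}^m$ is the sum of the $m-K$ smallest values among $|z_1|,\ldots,|z_m|$. A point is d-stationary if the directional derivative of the objective there is $\ge0$ in every direction. *)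

theory Defs
  imports "HOL-Analysis.Analysis"
begin

(* Vectors in R^n are represented as functions nat => real; only the
   coordinates 0..n-1 are used (coordinate i here is coordinate i+1 of the paper). *)

definition D2 :: "nat \<Rightarrow> (nat \<Rightarrow> real) \<Rightarrow> (nat \<Rightarrow> real)" where
  "D2 n x = (\<lambda>i. if i < n - 2 then x i - 2 * x (i+1) + x (i+2) else 0)"

definition trimmed_l1 :: "nat \<Rightarrow> nat \<Rightarrow> (nat \<Rightarrow> real) \<Rightarrow> real" where
  "trimmed_l1 K m z = sum_list (take (m - K) (sort (map (\<lambda>i. \<bar>z i\<bar>) [0..<m])))"

definition objective :: "nat \<Rightarrow> nat \<Rightarrow> real \<Rightarrow> (nat \<Rightarrow> real) \<Rightarrow> (nat \<Rightarrow> real) \<Rightarrow> real" where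
  "objective n K \<gamma> b x =
     (1/2) * (\<Sum>i<n. (b i - x i)^2) + \<gamma> * trimmed_l1 K (n - 2) (D2 n x)"

definition has_dir_deriv :: "((nat \<Rightarrow> real) \<Rightarrow> real) \<Rightarrow> (nat \<Rightarrow> real) \<Rightarrow> (nat \<Rightarrow> real) \<Rightarrow> real \<Rightarrow> bool" where
  "has_dir_deriv f x d D \<longleftrightarrow>
     ((\<lambda>t. (f (\<lambda>i. x i + t * d i) - f x) / t) \<longlongrightarrow> D) (at_right 0)"

definition d_stationary :: "((nat \<Rightarrow> real) \<Rightarrow> real) \<Rightarrow> (nat \<Rightarrow> real) \<Rightarrow> bool" where
  "d_stationary f x \<longleftrightarrow> (\<forall>d. \<exists>D. has_dir_deriv f x d D \<and> D \<ge> 0)"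

(* Projection bhat = X (X^T X)^{-1} X^T b, where row i (1-based) of X is (1, i).
   Written out: G = X^T X = [[s0, s1],[s1, s2]], c = X^T b = (c0, c1),
   (alpha, beta) = G^{-1} c (explicit 2x2 inverse), bhat_i = alpha + beta * i. *)
definition proj_lin :: "nat \<Rightarrow> (nat \<Rightarrow> real) \<Rightarrow> (nat \<Rightarrow> real)" where
  "proj_lin n b = (let
      s0 = (\<Sum>i<n. 1::real);
      s1 = (\<Sum>i<n. real (i+1));
      s2 = (\<Sum>i<n. real (i+1)^2);
      c0 = (\<Sum>i<n. b i);
      c1 = (\<Sum>i<n. real (i+1) * b i);
      det = s0 * s2 - s1^2;
      \<alpha> = (s2 * c0 - s1 * c1) / det;
      \<beta> = (s0 * c1 - s1 * c0) / det
    in (\<lambda>i. \<alpha> + \<beta> * real (i+1)))"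

definition norm2 :: "nat \<Rightarrow> (nat \<Rightarrow> real) \<Rightarrow> real" where
  "norm2 n v = sqrt (\<Sum>i<n. (v i)^2)"

end

theory Submission
  imports Defs
begin

(*
  Write sigma = 2 sqrt ((1 - cos (pi/n)) (1 - cos (pi/(n-1)))), T for the trimmed l1 term and
  R for the residual map of least-squares fitting by affine sequences, so that b - bhat = R b
  and D2 (R y) = D2 y.  Assume T (D2 x) > 0 at a d-stationary point x; put w = R (b - x).

  Moving along -R x multiplies D2 x, and hence T, by 1 - t; stationarity gives
  <w, R x> >= gamma T >= 0, and since w = R b - R x this yields ||w|| <= ||R b||.

  Some nonzero entry (D2 x)_i is among the n - 2 - K smallest in absolute value, so lowering
  |(D2 x)_i| by t lowers T by at least t.  Moving along R g, where D2 g is the unit vector e_i,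
  does exactly this; stationarity gives gamma <= |<w, g>| <= ||w|| ||g||.

  Finally ||g|| sigma <= 1 (from |g_j| <= (n - 1)/4, 1 - cos u <= u^2/2 and pi^4 < 98.5), so
  gamma sigma <= ||R b||, contradicting the hypothesis.
*)

lemma sum_take_sorted_le_sum_mset:
  fixes ys :: "'a :: {linorder, ordered_comm_monoid_add} list"
  assumes "sorted ys" "M \<subseteq># mset ys" "size M = k"
  shows "sum_list (take k ys) \<le> sum_mset M"
  using assms
proof (induction ys arbitrary: k M)
  case Nil then show ?case by simp
next
  case (Cons y ys)
  show ?case
  proof (cases k)
    case 0 then show ?thesis using Cons by simp
  next
    case (Suc k')
    have "sorted ys" using Cons.prems(1) by simp
    show ?thesis
    proof (cases "y \<in># M")
      case True
      then obtain M' where M: "M = add_mset y M'" by (metis multi_member_split)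
      have "sum_list (take k' ys) \<le> sum_mset M'"
        using Cons M Suc \<open>sorted ys\<close> by auto
      then show ?thesis using M Suc by (simp add: add_left_mono)
    next
      case False
      then have sub: "M \<subseteq># mset ys" using Cons.prems(2)
        by (metis mset.simps(2) Diff_eq_empty_iff_mset minus_add_mset_if_not_in_lhs)
      obtain u M' where M: "M = add_mset u M'"
        using Cons.prems(3) Suc by (metis multiset_cases size_empty nat.distinct(1))
      have "y \<le> u" using Cons.prems(1) sub M by (auto dest: mset_subset_eqD)
      moreover have "M' \<subseteq># mset ys"
        using sub M by (metis mset_subset_eq_insertD subset_mset.less_imp_le)
      then have "sum_list (take k' ys) \<le> sum_mset M'"
        using Cons.IH[OF \<open>sorted ys\<close>] M Cons.prems(3) Suc by simp
      ultimately show ?thesis using M Suc by (simp add: add_mono)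
    qed
  qed
qed

definition smallest_abs :: "nat \<Rightarrow> nat \<Rightarrow> (nat \<Rightarrow> real) \<Rightarrow> real list" where
  "smallest_abs K m z = take (m - K) (sort (map (\<lambda>j. \<bar>z j\<bar>) [0..<m]))"

lemma trimmed_l1_eq_sum_smallest_abs: "trimmed_l1 K m z = sum_list (smallest_abs K m z)"
  by (simp add: trimmed_l1_def smallest_abs_def)

lemma trimmed_l1_nonneg: "0 \<le> trimmed_l1 K m z"
  unfolding trimmed_l1_def by (rule sum_list_nonneg) (auto dest!: in_set_takeD)

lemma trimmed_l1_scale:
  assumes "0 \<le> c"
  shows "trimmed_l1 K m (\<lambda>i. c * z i) = c * trimmed_l1 K m z"
proof -
  let ?L = "map (\<lambda>i. \<bar>z i\<bar>) [0..<m]"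
  have "sorted (map ((*) c) (sort ?L))"
    unfolding sorted_map
    by (rule sorted_wrt_mono_rel[of _ "(\<le>)"]) (auto intro: mult_left_mono assms)
  then have sort_scale: "sort (map ((*) c) ?L) = map ((*) c) (sort ?L)"
    by (intro properties_for_sort) (simp_all only: mset_map mset_sort)
  have abs_scale: "map (\<lambda>i. \<bar>c * z i\<bar>) [0..<m] = map ((*) c) ?L"
    using assms by (simp add: abs_mult)
  show ?thesis
    unfolding trimmed_l1_def abs_scale sort_scale by (simp add: take_map sum_list_const_mult)
qed

lemma trimmed_l1_update_le:
  assumes "i < m" "\<bar>z i\<bar> \<in> set (smallest_abs K m z)"
  shows "trimmed_l1 K m (z(i := u)) \<le> trimmed_l1 K m z - \<bar>z i\<bar> + \<bar>u\<bar>"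
proof -
  define L where "L = map (\<lambda>j. \<bar>z j\<bar>) [0..<m]"
  define Mk where "Mk = mset (take (m - K) (sort L))"
  have zi: "\<bar>z i\<bar> \<in># Mk" using assms(2) by (simp add: Mk_def L_def smallest_abs_def)
  have "K < m" using assms(2) by (cases "m \<le> K") (auto simp: smallest_abs_def)
  have "Mk \<subseteq># mset L"
    unfolding Mk_def by (metis append_take_drop_id mset_append mset_sort mset_subset_eq_add_left)
  then have "add_mset \<bar>u\<bar> (Mk - {#\<bar>z i\<bar>#}) \<subseteq># add_mset \<bar>u\<bar> (mset L - {#\<bar>z i\<bar>#})"
    by (auto simp: subseteq_mset_def diff_le_mono)
  also have "\<dots> = mset (map (\<lambda>j. \<bar>(z(i := u)) j\<bar>) [0..<m])"
  proof -
    have "map (\<lambda>j. \<bar>(z(i := u)) j\<bar>) [0..<m] = L[i := \<bar>u\<bar>]"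
      by (rule nth_equalityI) (auto simp: L_def nth_list_update)
    then show ?thesis using assms(1) by (simp add: mset_update L_def)
  qed
  finally have "trimmed_l1 K m (z(i := u)) \<le> sum_mset (add_mset \<bar>u\<bar> (Mk - {#\<bar>z i\<bar>#}))"
    unfolding trimmed_l1_def using zi \<open>K < m\<close>
    by (intro sum_take_sorted_le_sum_mset) (simp_all add: size_Diff_singleton Mk_def L_def)
  also have "\<dots> = sum_mset Mk - \<bar>z i\<bar> + \<bar>u\<bar>"
    using sum_mset.remove[OF zi] by simp
  also have "sum_mset Mk = trimmed_l1 K m z"
    by (simp add: Mk_def L_def trimmed_l1_def sum_mset_sum_list)
  finally show ?thesis .
qed

lemma trimmed_l1_posE:
  assumes "0 < trimmed_l1 K m z"
  obtains i where "i < m" "z i \<noteq> 0" "\<bar>z i\<bar> \<in> set (smallest_abs K m z)"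
proof -
  have "\<not> (\<forall>e \<in> set (smallest_abs K m z). e = 0)"
    using assms unfolding trimmed_l1_eq_sum_smallest_abs smallest_abs_def
    by (subst sum_list_nonneg_eq_0_iff[symmetric]) (auto dest!: in_set_takeD)
  then obtain e where e: "e \<in> set (smallest_abs K m z)" "e \<noteq> 0" by blast
  then obtain i where "i < m" "e = \<bar>z i\<bar>" by (auto simp: smallest_abs_def dest!: in_set_takeD)
  with e show ?thesis using that by auto
qed

definition lin_residual :: "nat \<Rightarrow> (nat \<Rightarrow> real) \<Rightarrow> nat \<Rightarrow> real" where
  "lin_residual n y = (\<lambda>j. y j - proj_lin n y j)"

lemma proj_lin_affine: "\<exists>A B. proj_lin n y = (\<lambda>j. A + B * real (j+1))"
  unfolding proj_lin_def Let_def by blast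

lemma proj_lin_diff: "proj_lin n (\<lambda>j. y j - x j) j = proj_lin n y j - proj_lin n x j"
proof -
  have lin_comb: "(s2*(a-b) - s1*(c-d))/D + (N*(c-d) - s1*(a-b))/D*J
      = ((s2*a - s1*c)/D + (N*c - s1*a)/D*J) - ((s2*b - s1*d)/D + (N*d - s1*b)/D*J)"
    for s1 s2 a b c d D N J :: real
    by (cases "D = 0") (simp_all add: field_simps)
  have "(\<Sum>i<n. real (i+1) * (y i - x i)) = (\<Sum>i<n. real (i+1) * y i) - (\<Sum>i<n. real (i+1) * x i)"
    by (simp add: right_diff_distrib sum_subtractf)
  then show ?thesis unfolding proj_lin_def Let_def sum_subtractf[of y x]
    by (simp only: lin_comb)
qed

lemma lin_residual_diff: "lin_residual n (\<lambda>j. y j - x j) j = lin_residual n y j - lin_residual n x j"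
  unfolding lin_residual_def proj_lin_diff by simp

lemma sum_of_nat_Suc: "(\<Sum>i<n. real (i+1)) = real n * (real n + 1) / 2"
  by (induction n) (auto simp: field_simps)

lemma sum_of_nat_Suc_squared: "(\<Sum>i<n. real (i+1)^2) = real n * (real n + 1) * (2 * real n + 1) / 6"
  by (induction n) (auto simp: field_simps power2_eq_square)

lemma lin_residual_normal_equations:
  assumes "n \<ge> 2"
  shows "(\<Sum>j<n. lin_residual n y j) = 0" "(\<Sum>j<n. real (j+1) * lin_residual n y j) = 0"
proof -
  define s1 where "s1 = (\<Sum>i<n. real (i+1))"
  define s2 where "s2 = (\<Sum>i<n. real (i+1)^2)"
  define c0 where "c0 = (\<Sum>i<n. y i)"
  define c1 where "c1 = (\<Sum>i<n. real (i+1) * y i)"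
  define det where "det = real n * s2 - s1^2"
  define \<alpha> where "\<alpha> = (s2 * c0 - s1 * c1) / det"
  define \<beta> where "\<beta> = (real n * c1 - s1 * c0) / det"
  have P: "proj_lin n y = (\<lambda>j. \<alpha> + \<beta> * real (j+1))"
    unfolding proj_lin_def Let_def \<alpha>_def \<beta>_def det_def s1_def s2_def c0_def c1_def by simp
  have "det = real n ^ 2 * (real n + 1) * (real n - 1) / 12"
    unfolding det_def s1_def s2_def sum_of_nat_Suc sum_of_nat_Suc_squared
    by (simp add: field_simps power2_eq_square)
  moreover have "real n ^ 2 * (real n + 1) * (real n - 1) > 0" using assms by simp
  ultimately have "det \<noteq> 0" by simp
  have "(\<Sum>j<n. lin_residual n y j) = c0 - (real n * \<alpha> + \<beta> * s1)"
    unfolding lin_residual_def P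
    by (simp add: sum_subtractf sum.distrib sum_distrib_left[symmetric] c0_def s1_def)
  also have "real n * \<alpha> + \<beta> * s1 = (real n * (s2 * c0 - s1 * c1) + (real n * c1 - s1 * c0) * s1) / det"
    unfolding \<alpha>_def \<beta>_def using \<open>det \<noteq> 0\<close> by (simp add: field_simps)
  also have "real n * (s2 * c0 - s1 * c1) + (real n * c1 - s1 * c0) * s1 = c0 * det"
    by (simp add: det_def algebra_simps power2_eq_square)
  finally show "(\<Sum>j<n. lin_residual n y j) = 0" using \<open>det \<noteq> 0\<close> by simp
  have "(\<Sum>j<n. real (j+1) * lin_residual n y j) = c1 - (\<alpha> * s1 + \<beta> * s2)"
    unfolding lin_residual_def P
    by (simp add: sum_subtractf sum.distrib sum_distrib_left[symmetric] c1_def s1_def s2_def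
        algebra_simps power2_eq_square)
  also have "\<alpha> * s1 + \<beta> * s2 = ((s2 * c0 - s1 * c1) * s1 + (real n * c1 - s1 * c0) * s2) / det"
    unfolding \<alpha>_def \<beta>_def using \<open>det \<noteq> 0\<close> by (simp add: field_simps)
  also have "(s2 * c0 - s1 * c1) * s1 + (real n * c1 - s1 * c0) * s2 = c1 * det"
    by (simp add: det_def algebra_simps power2_eq_square)
  finally show "(\<Sum>j<n. real (j+1) * lin_residual n y j) = 0" using \<open>det \<noteq> 0\<close> by simp
qed

lemma lin_residual_orthogonal_affine:
  assumes "n \<ge> 2"
  shows "(\<Sum>j<n. lin_residual n y j * (A + B * real (j+1))) = 0"
proof -
  have "(\<Sum>j<n. lin_residual n y j * (A + B * real (j+1)))
      = A * (\<Sum>j<n. lin_residual n y j) + B * (\<Sum>j<n. real (j+1) * lin_residual n y j)"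
    by (simp add: sum_distrib_left sum.distrib algebra_simps)
  then show ?thesis using lin_residual_normal_equations[OF assms] by simp
qed

lemma lin_residual_orthogonal_proj_lin:
  assumes "n \<ge> 2"
  shows "(\<Sum>j<n. lin_residual n y j * proj_lin n u j) = 0"
  using proj_lin_affine[of n u] lin_residual_orthogonal_affine[OF assms] by auto

lemma D2_add_scaled: "D2 n (\<lambda>j. x j + t * d j) = (\<lambda>j. D2 n x j + t * D2 n d j)"
  unfolding D2_def by (auto simp: algebra_simps)

lemma D2_scale: "D2 n (\<lambda>j. c * y j) = (\<lambda>j. c * D2 n y j)"
  unfolding D2_def by (auto simp: algebra_simps)

lemma D2_lin_residual: "D2 n (lin_residual n x) = D2 n x"
proof -
  obtain A B where "proj_lin n x = (\<lambda>j. A + B * real (j+1))" using proj_lin_affine by blast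
  then show ?thesis
    unfolding lin_residual_def D2_def by (auto simp: algebra_simps)
qed

(* Discrete Green's function of the second difference with zero values at 0 and n - 1. *)
definition green :: "nat \<Rightarrow> nat \<Rightarrow> nat \<Rightarrow> real" where
  "green n p j = - (real (min j p) * (real n - 1 - real (max j p))) / (real n - 1)"

lemma D2_green:
  assumes "n \<ge> 3" "i < n - 2"
  shows "D2 n (green n (i+1)) = (\<lambda>j. if j = i then 1 else 0)"
proof -
  let ?h = "\<lambda>j. real (min j (i+1)) * (real n - 1 - real (max j (i+1)))"
  have h: "D2 n ?h j = (if j = i then - (real n - 1) else 0)" for j
  proof -
    consider "n - 2 \<le> j" | "j < i" | "j = i" | "j = i + 1" | "i + 1 < j" by linarith
    then show ?thesis
      by cases (use assms in \<open>auto simp: D2_def min_def max_def algebra_simps\<close>)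
  qed
  have "green n (i+1) = (\<lambda>j. (- 1 / (real n - 1)) * ?h j)"
    unfolding green_def by auto
  then have "D2 n (green n (i+1))
      = (\<lambda>j. (- 1 / (real n - 1)) * (if j = i then - (real n - 1) else 0))"
    by (simp only: D2_scale h)
  then show ?thesis using assms by (simp add: fun_eq_iff divide_eq_minus_1_iff)
qed

lemma abs_green_le:
  assumes "n \<ge> 2" "p < n" "j < n"
  shows "\<bar>green n p j\<bar> \<le> (real n - 1) / 4"
proof -
  have "real n - 1 > 0" using assms by linarith
  have "0 \<le> real (min j p) * (real n - 1 - real (max j p))"
    using assms by (simp add: of_nat_diff)
  moreover have "real (min j p) * (real n - 1 - real (max j p)) \<le> real p * (real n - 1 - real p)"
    using assms by (intro mult_mono) (auto simp: min_def max_def)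
  moreover have "real p * (real n - 1 - real p) \<le> (real n - 1)^2 / 4"
    using zero_le_power2[of "real n - 1 - 2 * real p"] by (simp add: power2_eq_square algebra_simps)
  ultimately show ?thesis using \<open>real n - 1 > 0\<close>
    by (simp add: green_def abs_div_pos divide_le_eq power2_eq_square)
qed

lemma sum_green_squared_le:
  assumes "n \<ge> 2" "p < n"
  shows "(\<Sum>j<n. (green n p j)^2) \<le> (real n - 2) * ((real n - 1) / 4)^2"
proof -
  have "(\<Sum>j<n. (green n p j)^2) = (\<Sum>j\<in>{1..<n-1}. (green n p j)^2)"
  proof (rule sum.mono_neutral_right)
    show "\<forall>j\<in>{..<n} - {1..<n-1}. (green n p j)^2 = 0"
      using assms by (auto simp: green_def of_nat_diff max_def)
  qed auto
  also have "\<dots> \<le> (\<Sum>j\<in>{1..<n-1}. ((real n - 1) / 4)^2)"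
    using abs_green_le[OF assms] by (intro sum_mono) (auto simp: abs_le_square_iff[symmetric])
  also have "\<dots> = (real n - 2) * ((real n - 1) / 4)^2"
    using assms by (simp add: of_nat_diff)
  finally show ?thesis .
qed

lemma one_minus_cos_le: "1 - cos x \<le> x^2 / 2" for x :: real
proof -
  have "cos x = 1 - 2 * sin (x/2) ^ 2" using cos_double_sin[of "x/2"] by simp
  moreover have "sin (x/2) ^ 2 \<le> (x/2)^2"
    using abs_sin_x_le_abs_x[of "x/2"] abs_le_square_iff by fastforce
  ultimately show ?thesis by (simp add: power_divide)
qed

lemma pi_pow4_mult_le: "pi ^ 4 * (x - 2) \<le> 16 * x^2"
proof (cases "x \<le> 2")
  case True
  then have "pi ^ 4 * (x - 2) \<le> 0" by (intro mult_nonneg_nonpos) simp_all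
  then show ?thesis using zero_le_power2[of x] by linarith
next
  case False
  have "pi ^ 4 \<le> 3.15 ^ 4" using pi_approx(2) by (intro power_mono) simp_all
  then have "pi ^ 4 * (x - 2) \<le> 3.15 ^ 4 * (x - 2)" using False by (intro mult_right_mono) simp_all
  also have "\<dots> \<le> 16 * x^2"
    \<comment> \<open>complete the square: 12.30700078125 = 3.15^4 / 8\<close>
    using zero_le_power2[of "4 * x - 12.30700078125"] by (simp add: power2_eq_square power4_eq_xxxx algebra_simps)
  finally show ?thesis .
qed

lemma norm2_green_mult_le_1:
  assumes "n \<ge> 3" "p < n"
  shows "norm2 n (green n p) * (2 * sqrt ((1 - cos (pi / real n)) * (1 - cos (pi / real (n - 1))))) \<le> 1"
proof -
  define a where "a = 1 - cos (pi / real n)"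
  define b where "b = 1 - cos (pi / real (n - 1))"
  have n1: "real (n - 1) = real n - 1" using assms by (simp add: of_nat_diff)
  have a: "0 \<le> a" "a \<le> (pi / real n)^2 / 2" unfolding a_def using one_minus_cos_le by auto
  have b: "0 \<le> b" "b \<le> (pi / (real n - 1))^2 / 2"
    unfolding b_def n1[symmetric] using one_minus_cos_le by auto
  have g: "0 \<le> (\<Sum>j<n. (green n p j)^2)" "(\<Sum>j<n. (green n p j)^2) \<le> (real n - 2) * ((real n - 1) / 4)^2"
    using sum_green_squared_le[of n p] assms by (auto intro: sum_nonneg)
  have "(norm2 n (green n p) * (2 * sqrt (a * b)))^2 = (\<Sum>j<n. (green n p j)^2) * (4 * (a * b))"
    using a(1) b(1) g(1) by (simp add: norm2_def power_mult_distrib)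
  also have "\<dots> \<le> (real n - 2) * ((real n - 1) / 4)^2 * (4 * (((pi / real n)^2 / 2) * ((pi / (real n - 1))^2 / 2)))"
    using a b g assms by (intro mult_mono mult_left_mono) auto
  also have "\<dots> = pi ^ 4 * (real n - 2) / (16 * real n ^ 2)"
  proof -
    have "(N - 2) * (M / 4)^2 * (4 * ((pi / N)^2 / 2 * ((pi / M)^2 / 2))) = pi^4 * (N - 2) / (16 * N^2)"
      if "N \<noteq> 0" "M \<noteq> 0" for N M :: real
      using that by (simp add: field_simps power2_eq_square power4_eq_xxxx)
    then show ?thesis using assms by simp
  qed
  also have "\<dots> \<le> 1"
    using pi_pow4_mult_le[of "real n"] assms by (simp add: divide_le_eq)
  finally have "(norm2 n (green n p) * (2 * sqrt (a * b)))^2 \<le> 1^2" by simp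
  then show ?thesis unfolding a_def b_def by (rule power2_le_imp_le) simp
qed

lemma abs_sum_mult_le_norm2: "\<bar>\<Sum>i<n. u i * v i\<bar> \<le> norm2 n u * norm2 n v"
proof -
  have "(\<Sum>i<n. u i * v i)^2 \<le> (\<Sum>i<n. (u i)^2) * (\<Sum>i<n. (v i)^2)"
    by (rule Cauchy_Schwarz_ineq_sum)
  then have "sqrt ((\<Sum>i<n. u i * v i)^2) \<le> sqrt ((\<Sum>i<n. (u i)^2) * (\<Sum>i<n. (v i)^2))"
    by (rule real_sqrt_le_mono)
  then show ?thesis by (simp add: norm2_def real_sqrt_mult)
qed

lemma norm2_le_if_sum_squares_le:
  assumes "(\<Sum>i<n. (w i)^2) \<le> (\<Sum>i<n. w i * c i)"
  shows "norm2 n w \<le> norm2 n c"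
proof -
  have "norm2 n w ^ 2 = (\<Sum>i<n. (w i)^2)" by (simp add: norm2_def sum_nonneg)
  also have "\<dots> \<le> norm2 n w * norm2 n c"
    using assms abs_sum_mult_le_norm2[of w c n] by linarith
  finally have "norm2 n w ^ 2 \<le> norm2 n w * norm2 n c" .
  moreover have "0 \<le> norm2 n w" "0 \<le> norm2 n c" by (simp_all add: norm2_def sum_nonneg)
  ultimately show ?thesis by (metis power2_eq_square mult_le_cancel_left_pos less_eq_real_def)
qed

lemma sum_mult_lin_residual:
  assumes "n \<ge> 2"
  shows "(\<Sum>j<n. y j * lin_residual n u j) = (\<Sum>j<n. lin_residual n y j * lin_residual n u j)"
proof -
  have "(\<Sum>j<n. y j * lin_residual n u j)
      = (\<Sum>j<n. lin_residual n y j * lin_residual n u j) + (\<Sum>j<n. lin_residual n u j * proj_lin n y j)"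
    unfolding sum.distrib[symmetric] by (rule sum.cong) (auto simp: lin_residual_def algebra_simps)
  then show ?thesis using lin_residual_orthogonal_proj_lin[OF assms] by simp
qed

lemma has_dir_deriv_le:
  assumes "has_dir_deriv f x d D" "0 < \<epsilon>"
    and "\<And>t. 0 < t \<Longrightarrow> t < \<epsilon> \<Longrightarrow> f (\<lambda>i. x i + t * d i) - f x \<le> t * (A + t * B)"
  shows "D \<le> A"
proof -
  have "((\<lambda>t. A + t * B) \<longlongrightarrow> A + 0 * B) (at_right 0)"
    by (intro tendsto_intros)
  moreover have "eventually (\<lambda>t. (f (\<lambda>i. x i + t * d i) - f x) / t \<le> A + t * B) (at_right 0)"
    unfolding eventually_at_right_field using assms(2,3)
    by (intro exI[of _ \<epsilon>]) (auto simp: divide_le_eq mult.commute)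
  ultimately have "D \<le> A + 0 * B"
    using assms(1) unfolding has_dir_deriv_def by (intro tendsto_le[OF trivial_limit_at_right_real])
  then show ?thesis by simp
qed

lemma objective_add_scaled:
  "objective n K \<gamma> b (\<lambda>i. x i + t * d i) - objective n K \<gamma> b x =
    t * ((\<Sum>i<n. (x i - b i) * d i) + t * ((\<Sum>i<n. (d i)^2) / 2))
    + \<gamma> * (trimmed_l1 K (n - 2) (D2 n (\<lambda>i. x i + t * d i)) - trimmed_l1 K (n - 2) (D2 n x))"
proof -
  have "(\<Sum>i<n. (b i - (x i + t * d i))^2)
      = (\<Sum>i<n. (b i - x i)^2 + (2 * t) * ((x i - b i) * d i) + t^2 * (d i)^2)"
    by (rule sum.cong) (auto simp: power2_eq_square algebra_simps)
  also have "\<dots> = (\<Sum>i<n. (b i - x i)^2) + (2 * t) * (\<Sum>i<n. (x i - b i) * d i) + t^2 * (\<Sum>i<n. (d i)^2)"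
    by (simp add: sum.distrib sum_distrib_left)
  finally show ?thesis unfolding objective_def by (simp add: algebra_simps power2_eq_square)
qed

lemma d_stationary_decrease_rate_le:
  assumes "d_stationary (objective n K \<gamma> b) x" "0 \<le> \<gamma>" "0 < \<epsilon>"
    and "\<And>t. 0 < t \<Longrightarrow> t < \<epsilon> \<Longrightarrow>
      trimmed_l1 K (n - 2) (D2 n (\<lambda>i. x i + t * d i)) \<le> trimmed_l1 K (n - 2) (D2 n x) - t * r"
  shows "\<gamma> * r \<le> (\<Sum>i<n. (x i - b i) * d i)"
proof -
  obtain D where D: "has_dir_deriv (objective n K \<gamma> b) x d D" "0 \<le> D"
    using assms(1) unfolding d_stationary_def by blast
  have "D \<le> (\<Sum>i<n. (x i - b i) * d i) - \<gamma> * r"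
  proof (rule has_dir_deriv_le[OF D(1) assms(3)])
    fix t :: real assume t: "0 < t" "t < \<epsilon>"
    have "\<gamma> * (trimmed_l1 K (n - 2) (D2 n (\<lambda>i. x i + t * d i)) - trimmed_l1 K (n - 2) (D2 n x))
        \<le> t * (- \<gamma> * r)"
      using mult_left_mono[OF assms(4)[OF t] assms(2)] by (simp add: algebra_simps)
    then show "objective n K \<gamma> b (\<lambda>i. x i + t * d i) - objective n K \<gamma> b x
        \<le> t * ((\<Sum>i<n. (x i - b i) * d i) - \<gamma> * r + t * ((\<Sum>i<n. (d i)^2) / 2))"
      unfolding objective_add_scaled by (simp add: algebra_simps)
  qed
  then show ?thesis using D(2) by simp
qed

lemma d_stationary_residual_norm_le:
  assumes "n \<ge> 2" "0 \<le> \<gamma>" "d_stationary (objective n K \<gamma> b) x"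
  shows "norm2 n (lin_residual n (\<lambda>j. b j - x j)) \<le> norm2 n (lin_residual n b)"
proof -
  let ?v = "lin_residual n x" and ?w = "lin_residual n (\<lambda>j. b j - x j)"
  have "\<gamma> * trimmed_l1 K (n - 2) (D2 n x) \<le> (\<Sum>j<n. (x j - b j) * - ?v j)"
  proof (rule d_stationary_decrease_rate_le[OF assms(3,2) zero_less_one])
    fix t :: real assume "0 < t" "t < 1"
    have "D2 n (\<lambda>j. x j + t * - ?v j) = (\<lambda>j. (1 - t) * D2 n x j)"
      using D2_add_scaled[of n x t "\<lambda>j. - ?v j"] D2_scale[of n "-1" ?v]
      by (simp add: D2_lin_residual algebra_simps)
    then have "trimmed_l1 K (n - 2) (D2 n (\<lambda>j. x j + t * - ?v j))
        = (1 - t) * trimmed_l1 K (n - 2) (D2 n x)"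
      using \<open>t < 1\<close> by (simp only: trimmed_l1_scale diff_ge_0_iff_ge less_imp_le)
    then show "trimmed_l1 K (n - 2) (D2 n (\<lambda>j. x j + t * - ?v j))
        \<le> trimmed_l1 K (n - 2) (D2 n x) - t * trimmed_l1 K (n - 2) (D2 n x)"
      by (simp add: algebra_simps)
  qed
  also have "\<dots> = (\<Sum>j<n. ?w j * ?v j)"
    using sum_mult_lin_residual[OF assms(1), of "\<lambda>j. b j - x j" x] by (simp add: algebra_simps)
  finally have "0 \<le> (\<Sum>j<n. ?w j * ?v j)"
    using assms(2) trimmed_l1_nonneg by (meson order_trans mult_nonneg_nonneg)
  moreover have "?w j = lin_residual n b j - ?v j" for j by (rule lin_residual_diff)
  ultimately have "(\<Sum>j<n. (?w j)^2) \<le> (\<Sum>j<n. ?w j * lin_residual n b j)"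
    by (simp add: power2_eq_square right_diff_distrib sum_subtractf)
  then show ?thesis by (rule norm2_le_if_sum_squares_le)
qed

lemma d_stationary_gamma_le_green:
  assumes "n \<ge> 3" "K < n - 2" "0 \<le> \<gamma>" "d_stationary (objective n K \<gamma> b) x"
    and "0 < trimmed_l1 K (n - 2) (D2 n x)"
  obtains p where "p < n" "\<gamma> \<le> norm2 n (lin_residual n (\<lambda>j. b j - x j)) * norm2 n (green n p)"
proof -
  obtain i where i: "i < n - 2" "D2 n x i \<noteq> 0"
    and top: "\<bar>D2 n x i\<bar> \<in> set (smallest_abs K (n - 2) (D2 n x))"
    using trimmed_l1_posE[OF assms(5)] by blast
  define s where "s = sgn (D2 n x i)"
  define g where "g = green n (i+1)"
  define d where "d = (\<lambda>j. - s * lin_residual n g j)"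
  have "\<gamma> * 1 \<le> (\<Sum>j<n. (x j - b j) * d j)"
  proof (rule d_stationary_decrease_rate_le[OF assms(4,3)])
    show "0 < \<bar>D2 n x i\<bar>" using i by simp
    fix t :: real assume "0 < t" "t < \<bar>D2 n x i\<bar>"
    have "D2 n d = (\<lambda>j. - s * (if j = i then 1 else 0))"
      unfolding d_def g_def by (simp only: D2_scale D2_lin_residual D2_green[OF assms(1) i(1)])
    then have "D2 n (\<lambda>j. x j + t * d j) = (D2 n x)(i := D2 n x i - t * s)"
      by (auto simp: D2_add_scaled)
    moreover have "\<bar>D2 n x i - t * s\<bar> = \<bar>D2 n x i\<bar> - t"
      using \<open>0 < t\<close> \<open>t < \<bar>D2 n x i\<bar>\<close> by (auto simp: s_def sgn_if)
    ultimately show "trimmed_l1 K (n - 2) (D2 n (\<lambda>j. x j + t * d j))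
        \<le> trimmed_l1 K (n - 2) (D2 n x) - t * 1"
      using trimmed_l1_update_le[OF i(1) top, of "D2 n x i - t * s"] by simp
  qed
  also have "(\<Sum>j<n. (x j - b j) * d j) = s * (\<Sum>j<n. (b j - x j) * lin_residual n g j)"
    unfolding d_def sum_distrib_left by (rule sum.cong) (auto simp: algebra_simps)
  also have "\<dots> = s * (\<Sum>j<n. lin_residual n (\<lambda>j. b j - x j) j * g j)"
    using sum_mult_lin_residual[of n "\<lambda>j. b j - x j" g] sum_mult_lin_residual[of n g "\<lambda>j. b j - x j"]
      assms(1) by (simp add: mult.commute)
  also have "\<dots> \<le> \<bar>\<Sum>j<n. lin_residual n (\<lambda>j. b j - x j) j * g j\<bar>"
    by (simp add: s_def sgn_if abs_ge_self abs_ge_minus_self)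
  also have "\<dots> \<le> norm2 n (lin_residual n (\<lambda>j. b j - x j)) * norm2 n g"
    by (rule abs_sum_mult_le_norm2)
  finally show ?thesis using that[of "i+1"] i(1) by (simp add: g_def)
qed

theorem mainTheorem10:
  fixes n K :: nat and \<gamma> :: real and b xs :: "nat \<Rightarrow> real"
  assumes "n \<ge> 3" and "K \<le> n - 3" and "\<gamma> > 0"
    and "d_stationary (objective n K \<gamma> b) xs"
    and "\<gamma> > norm2 n (\<lambda>i. b i - proj_lin n b i) /
             (2 * sqrt ((1 - cos (pi / real n)) * (1 - cos (pi / real (n - 1)))))"
  shows "trimmed_l1 K (n - 2) (D2 n xs) = 0"
proof (rule ccontr)
  define \<sigma> where "\<sigma> = 2 * sqrt ((1 - cos (pi / real n)) * (1 - cos (pi / real (n - 1))))"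
  define w where "w = lin_residual n (\<lambda>j. b j - xs j)"
  assume "trimmed_l1 K (n - 2) (D2 n xs) \<noteq> 0"
  then have "0 < trimmed_l1 K (n - 2) (D2 n xs)"
    using trimmed_l1_nonneg[of K "n - 2" "D2 n xs"] by linarith
  moreover have "K < n - 2" using assms(1,2) by linarith
  ultimately obtain p where p: "p < n" "\<gamma> \<le> norm2 n w * norm2 n (green n p)"
    using d_stationary_gamma_le_green[OF assms(1) _ _ assms(4)] assms(3) unfolding w_def by force
  have "0 < 1 - cos (pi / m)" if "m \<ge> 2" for m :: real
    using cos_monotone_0_pi[of 0 "pi / m"] that by (simp add: field_simps)
  then have "0 < \<sigma>" using assms(1) unfolding \<sigma>_def by (simp add: of_nat_diff)
  have "\<gamma> * \<sigma> \<le> norm2 n w * (norm2 n (green n p) * \<sigma>)"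
    using mult_right_mono[OF p(2)] \<open>0 < \<sigma>\<close> by (simp add: mult.assoc)
  also have "\<dots> \<le> norm2 n w"
    using mult_left_mono[OF norm2_green_mult_le_1[OF assms(1) p(1), folded \<sigma>_def], of "norm2 n w"]
    by (simp add: norm2_def sum_nonneg)
  also have "\<dots> \<le> norm2 n (lin_residual n b)"
    unfolding w_def using assms(1,3,4) by (intro d_stationary_residual_norm_le) auto
  finally show False
    using assms(5) \<open>0 < \<sigma>\<close> unfolding \<sigma>_def[symmetric] by (simp add: lin_residual_def divide_less_eq)
qed

end
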